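(* Let $(X,\mathfrak{M},m)$ be a $\sigma$-finite measure space and let $f:X\to[0,\infty)$ be a probability density function with respect to $m$. Then for every $\beta\ge 0$, $$P_f(\{x\in X: pv_f(x)\le \beta\})\le \beta \qquad\text{and}\qquad P_f(\{x\in X: pv_f(x)>\beta\})\ge 1-\beta .$$ Moreover, equality holds in both inequalities if and only if $\beta=\sup\{pv_f(x): x\in X,\ pv_f(x)\le\beta\}$ (with the convention $\sup\emptyset=0$).
   Context: $f$ is a measurable function $f:X\to[0,\infty)$ with $\int_X f\,dm=1$. For a measurable set $S\in\mathfrak{M}$, $P_f(S):=\int_S f\,dm$. The p-value of $x\in X$ with respect to $f$ is $$pv_f(x):=\int_{\{t\in X:\ f(t)\le f(x)\}} f\,dm = P_f(\{t: f(t)\le f(x)\})\in[0,1].$$ *)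

theory Defs
  imports "HOL-Analysis.Analysis"
begin

definition Pf :: "'a measure \<Rightarrow> ('a \<Rightarrow> real) \<Rightarrow> 'a set \<Rightarrow> real" where
  "Pf M f S = (\<integral>x\<in>S. f x \<partial>M)"

definition pv :: "'a measure \<Rightarrow> ('a \<Rightarrow> real) \<Rightarrow> 'a \<Rightarrow> real" where
  "pv M f x = Pf M f {t \<in> space M. f t \<le> f x}"

definition sup0 :: "real set \<Rightarrow> real" where
  "sup0 S = (if S = {} then 0 else Sup S)"

end

theory Submission
  imports Defs
begin

text \<open>The set \<open>A = {pv \<le> \<beta>}\<close> is down-closed with respect to \<open>f\<close>, since \<open>pv\<close> is a monotone
  function of \<open>f\<close>. Hence \<open>A\<close> is the increasing union of the sublevel sets \<open>{f \<le> f y}\<close>, \<open>y \<in> A\<close>,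
  whose masses are exactly the values \<open>pv y\<close>. Along a cofinal sequence in \<open>A\<close>, continuity of
  \<open>P\<^sub>f\<close> from below gives \<open>P\<^sub>f(A) = sup {pv y | y \<in> A}\<close>, which is at most \<open>\<beta>\<close>; the second
  inequality is its complement, and both are equalities exactly when this supremum is \<open>\<beta>\<close>.\<close>

lemma Pf_mono:
  assumes "integrable M f" "\<And>x. x \<in> space M \<Longrightarrow> 0 \<le> f x"
    and "S \<in> sets M" "T \<in> sets M" "S \<subseteq> T"
  shows "Pf M f S \<le> Pf M f T"
  unfolding Pf_def set_lebesgue_integral_def
  using assms integrable_mult_indicator[OF assms(3,1)] integrable_mult_indicator[OF assms(4,1)]
  by (intro integral_mono) (auto split: split_indicator)

lemma Pf_space_Diff:
  assumes "integrable M f" "S \<in> sets M"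
  shows "Pf M f (space M - S) = (\<integral>x. f x \<partial>M) - Pf M f S"
proof -
  have "Pf M f (space M - S) = (\<integral>x. f x - indicator S x *\<^sub>R f x \<partial>M)"
    unfolding Pf_def set_lebesgue_integral_def
    by (intro Bochner_Integration.integral_cong) (auto split: split_indicator)
  then show ?thesis
    unfolding Pf_def set_lebesgue_integral_def
    using assms integrable_mult_indicator[OF assms(2,1)] by simp
qed

lemma pv_mono:
  assumes "integrable M f" "\<And>x. x \<in> space M \<Longrightarrow> 0 \<le> f x" "f \<in> borel_measurable M"
    and "f x \<le> f y"
  shows "pv M f x \<le> pv M f y"
  unfolding pv_def using assms by (intro Pf_mono) auto

lemma pv_measurable [measurable]:
  assumes "integrable M f" "\<And>x. x \<in> space M \<Longrightarrow> 0 \<le> f x" "f \<in> borel_measurable M"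
  shows "pv M f \<in> borel_measurable M"
proof -
  define F where "F s = Pf M f {t \<in> space M. f t \<le> s}" for s
  have "mono F"
    unfolding mono_def F_def using assms by (intro allI impI Pf_mono) auto
  then have "F \<in> borel_measurable borel"
    by (rule borel_measurable_mono)
  moreover have "pv M f = (\<lambda>x. F (f x))"
    unfolding pv_def F_def ..
  ultimately show ?thesis
    using assms(3) by simp
qed

lemma obtain_cofinal_seq:
  fixes g :: "'a \<Rightarrow> real"
  assumes "A \<noteq> {}"
  obtains x :: "nat \<Rightarrow> 'a" where "\<And>n. x n \<in> A" "\<And>y. y \<in> A \<Longrightarrow> \<exists>n. g y \<le> g (x n)"
proof (cases "bdd_above (g ` A)")
  case bdd: True
  define c where "c = Sup (g ` A)"
  have ub: "g y \<le> c" if "y \<in> A" for y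
    using bdd that unfolding c_def by (simp add: cSup_upper)
  show ?thesis
  proof (cases "\<exists>z\<in>A. g z = c")
    case True
    then obtain z where "z \<in> A" "g z = c" by blast
    then show ?thesis
      using ub that[of "\<lambda>_. z"] by auto
  next
    case False
    have "\<exists>z\<in>A. c - 1 / (real n + 1) < g z" for n :: nat
      using less_cSup_iff[of "g ` A" "c - 1 / (real n + 1)"] bdd assms
      unfolding c_def by auto
    then obtain x where x: "\<And>n. x n \<in> A" "\<And>n. c - 1 / (real n + 1) < g (x n)"
      by metis
    have "\<exists>n. g y \<le> g (x n)" if y: "y \<in> A" for y
    proof -
      have "g y < c" using ub[OF y] False y by force
      then obtain n where "inverse (real (Suc n)) < c - g y"
        using reals_Archimedean[of "c - g y"] by auto
      then have "g y < c - 1 / (real n + 1)" by (simp add: field_simps)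
      then show ?thesis using x(2)[of n] by (intro exI[of _ n]) linarith
    qed
    then show ?thesis using that x(1) by blast
  qed
next
  case False
  then have "\<exists>z\<in>A. real n < g z" for n :: nat
    unfolding bdd_above_def by (auto simp: not_le)
  then obtain x where x: "\<And>n. x n \<in> A" "\<And>n. real n < g (x n)" by metis
  have "\<exists>n. g y \<le> g (x n)" for y
  proof -
    obtain n where "g y \<le> real n" using real_arch_simple by blast
    then show ?thesis using x(2)[of n] by (intro exI[of _ n]) linarith
  qed
  then show ?thesis using that x(1) by blast
qed

lemma obtain_incseq_cofinal_seq:
  fixes g :: "'a \<Rightarrow> real"
  assumes "A \<noteq> {}"
  obtains x :: "nat \<Rightarrow> 'a"
  where "\<And>n. x n \<in> A" "incseq (\<lambda>n. g (x n))" "\<And>y. y \<in> A \<Longrightarrow> \<exists>n. g y \<le> g (x n)"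
proof -
  obtain z :: "nat \<Rightarrow> 'a" where z: "\<And>n. z n \<in> A" "\<And>y. y \<in> A \<Longrightarrow> \<exists>n. g y \<le> g (z n)"
    using obtain_cofinal_seq[OF assms] by blast
  have "\<exists>k\<le>n. \<forall>j\<le>n. g (z j) \<le> g (z k)" for n
  proof -
    have "Max ((\<lambda>j. g (z j)) ` {..n}) \<in> (\<lambda>j. g (z j)) ` {..n}"
      by (intro Max_in) auto
    then obtain k where "Max ((\<lambda>j. g (z j)) ` {..n}) = g (z k)" "k \<in> {..n}"
      by (rule imageE)
    then show ?thesis
      using Max_ge[of "(\<lambda>j. g (z j)) ` {..n}"] by (intro exI[of _ k]) auto
  qed
  then have "\<exists>k. \<forall>n. k n \<le> n \<and> (\<forall>j\<le>n. g (z j) \<le> g (z (k n)))"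
    by (intro choice allI) blast
  then obtain k where k: "\<And>n. k n \<le> n" "\<And>n j. j \<le> n \<Longrightarrow> g (z j) \<le> g (z (k n))"
    by blast
  show ?thesis
  proof (rule that[of "\<lambda>n. z (k n)"])
    show "z (k n) \<in> A" for n
      by (rule z(1))
    show "incseq (\<lambda>n. g (z (k n)))"
    proof (rule incseq_SucI)
      show "g (z (k n)) \<le> g (z (k (Suc n)))" for n
        using k(1)[of n] by (intro k(2)) simp
    qed
    show "\<exists>n. g y \<le> g (z (k n))" if y: "y \<in> A" for y
    proof -
      obtain n where "g y \<le> g (z n)" using z(2)[OF y] by blast
      then show ?thesis using k(2)[of n n] by (intro exI[of _ n]) simp
    qed
  qed
qed

lemma Pf_downset_eq_sup0_pv:
  assumes f: "f \<in> borel_measurable M" "integrable M f" "\<And>x. x \<in> space M \<Longrightarrow> 0 \<le> f x"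
    and A: "A \<in> sets M"
    and down: "\<And>y t. y \<in> A \<Longrightarrow> t \<in> space M \<Longrightarrow> f t \<le> f y \<Longrightarrow> t \<in> A"
  shows "Pf M f A = sup0 (pv M f ` A)"
proof (cases "A = {}")
  case True
  then show ?thesis by (simp add: sup0_def Pf_def set_lebesgue_integral_def)
next
  case ne: False
  note [measurable] = f(1) A
  have pv_le: "pv M f y \<le> Pf M f A" if "y \<in> A" for y
    unfolding pv_def using f A down[OF that] by (intro Pf_mono) auto
  have bdd: "bdd_above (pv M f ` A)"
    using pv_le by (rule bdd_aboveI2)
  obtain x where x: "\<And>n. x n \<in> A" "incseq (\<lambda>n. f (x n))"
    and cofinal: "\<And>y. y \<in> A \<Longrightarrow> \<exists>n. f y \<le> f (x n)"
    using obtain_incseq_cofinal_seq[OF ne, of f] by blast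
  define B where "B n = {t \<in> space M. f t \<le> f (x n)}" for n
  have B [measurable]: "B n \<in> sets M" for n
    unfolding B_def by measurable
  have "incseq B"
    using x(2) unfolding incseq_def B_def by force
  have UN_B: "(\<Union>n. B n) = A"
    using down x(1) cofinal sets.sets_into_space[OF A] unfolding B_def by fastforce
  have "set_integrable M (\<Union>n. B n) f"
    using integrable_mult_indicator[OF A f(2)] unfolding UN_B set_integrable_def .
  then have "(\<lambda>n. Pf M f (B n)) \<longlonglongrightarrow> Pf M f A"
    unfolding Pf_def UN_B[symmetric] by (rule set_integral_cont_up[OF B \<open>incseq B\<close>])
  moreover have "Pf M f (B n) \<le> Sup (pv M f ` A)" for n
    using cSup_upper[OF imageI[OF x(1)] bdd] unfolding B_def pv_def by auto
  ultimately have "Pf M f A \<le> Sup (pv M f ` A)"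
    by (intro LIMSEQ_le_const2) auto
  moreover have "Sup (pv M f ` A) \<le> Pf M f A"
    using ne pv_le by (intro cSup_least) auto
  ultimately show ?thesis
    using ne by (simp add: sup0_def)
qed

theorem lemma1:
  fixes M :: "'a measure" and f :: "'a \<Rightarrow> real" and \<beta> :: real
  assumes "sigma_finite_measure M"
    and "f \<in> borel_measurable M"
    and "\<And>x. x \<in> space M \<Longrightarrow> 0 \<le> f x"
    and "integrable M f"
    and "(\<integral>x. f x \<partial>M) = 1"
    and "0 \<le> \<beta>"
  shows "Pf M f {x \<in> space M. pv M f x \<le> \<beta>} \<le> \<beta>
    \<and> Pf M f {x \<in> space M. pv M f x > \<beta>} \<ge> 1 - \<beta>
    \<and> ((Pf M f {x \<in> space M. pv M f x \<le> \<beta>} = \<beta>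
          \<and> Pf M f {x \<in> space M. pv M f x > \<beta>} = 1 - \<beta>)
        \<longleftrightarrow> \<beta> = sup0 {pv M f x | x. x \<in> space M \<and> pv M f x \<le> \<beta>})"
proof -
  note [measurable] = assms(2) pv_measurable[OF assms(4,3,2)]
  define A where "A = {x \<in> space M. pv M f x \<le> \<beta>}"
  have A [measurable]: "A \<in> sets M"
    unfolding A_def by measurable
  have "Pf M f A = sup0 (pv M f ` A)"
    using assms(2-4) A pv_mono[OF assms(4,3,2)] unfolding A_def
    by (intro Pf_downset_eq_sup0_pv) (auto intro: order_trans)
  moreover have "sup0 (pv M f ` A) \<le> \<beta>"
    unfolding sup0_def A_def using assms(6) by (auto intro!: cSup_least)
  moreover have "{x \<in> space M. pv M f x > \<beta>} = space M - A"
    unfolding A_def by auto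
  moreover have "{pv M f x | x. x \<in> space M \<and> pv M f x \<le> \<beta>} = pv M f ` A"
    unfolding A_def by auto
  ultimately show ?thesis
    using Pf_space_Diff[OF assms(4) A] assms(5) unfolding A_def[symmetric] by auto
qed

end
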